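(* Let $A=B[x;\alpha,\delta]_p$ be a Poisson polynomial algebra over a field $k$ of characteristic zero, with $\delta$ locally nilpotent and $\alpha\delta=\delta(\alpha+s)$ for some $s\in k^\times$, and let $\theta:B\to B[x^{\pm1}]$ be given by $\theta(b)=\sum_{n\ge0}\frac{1}{n!}\left(\frac{-1}{s}\right)^n\delta^n(b)x^{-n}$. Then $\theta$ extends uniquely to an isomorphism of Poisson Laurent polynomial algebras $\theta:B[y^{\pm1};\alpha]_p\to B[x^{\pm1};\alpha,\delta]_p$ such that $\theta(y)=x$.
   Context: If $B$ is a Poisson algebra, $\alpha$ a Poisson derivation of $B$ and $\delta$ a derivation of $B$ with $\delta(\{a,b\})=\{\delta(a),b\}+\{a,\delta(b)\}+\alpha(a)\delta(b)-\delta(a)\alpha(b)$ for $a,b\in B$, then $B[x;\alpha,\delta]_p$ is $B[x]$ with the unique Poisson bracket extending that of $B$ with $\{x,b\}=\alpha(b)x+\delta(b)$, and $B[x^{\pm1};\alpha,\delta]_p$ is the unique extension of this Poisson structure to $B[x^{\pm1}]$. $B[y^{\pm1};\alpha]_p$ denotes $B[y^{\pm1};\alpha,0]_p$, i.e. $\{y,b\}=\alpha(b)y$. *)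

theory Defs
  imports "HOL-Computational_Algebra.Formal_Laurent_Series"
begin

text \<open>A Poisson algebra over the field k, where the k-algebra structure on the
commutative ring is given by the ring homomorphism iota from k.\<close>

definition k_algebra_hom :: "('k::field \<Rightarrow> 'b::comm_ring_1) \<Rightarrow> bool" where
  "k_algebra_hom \<iota> \<longleftrightarrow> \<iota> 1 = 1 \<and> (\<forall>c d. \<iota> (c + d) = \<iota> c + \<iota> d) \<and> (\<forall>c d. \<iota> (c * d) = \<iota> c * \<iota> d)"

definition subring_on :: "'b::comm_ring_1 set \<Rightarrow> bool" where
  "subring_on S \<longleftrightarrow> 0 \<in> S \<and> 1 \<in> S \<and> (\<forall>a\<in>S. \<forall>b\<in>S. a + b \<in> S \<and> a * b \<in> S \<and> - a \<in> S)"

definition poisson_on :: "'b::comm_ring_1 set \<Rightarrow> ('k::field \<Rightarrow> 'b) \<Rightarrow> ('b \<Rightarrow> 'b \<Rightarrow> 'b) \<Rightarrow> bool" where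
  "poisson_on S \<iota> P \<longleftrightarrow>
     subring_on S \<and> (\<forall>c. \<iota> c \<in> S) \<and>
     (\<forall>a\<in>S. \<forall>b\<in>S. P a b \<in> S) \<and>
     (\<forall>a\<in>S. \<forall>a'\<in>S. \<forall>b\<in>S. P (a + a') b = P a b + P a' b) \<and>
     (\<forall>c. \<forall>a\<in>S. \<forall>b\<in>S. P (\<iota> c * a) b = \<iota> c * P a b) \<and>
     (\<forall>a\<in>S. \<forall>b\<in>S. P a b = - P b a) \<and>
     (\<forall>a\<in>S. \<forall>b\<in>S. \<forall>c\<in>S. P a (P b c) + P b (P c a) + P c (P a b) = 0) \<and>
     (\<forall>a\<in>S. \<forall>b\<in>S. \<forall>c\<in>S. P a (b * c) = P a b * c + b * P a c)"

definition derivation :: "('k::field \<Rightarrow> 'b::comm_ring_1) \<Rightarrow> ('b \<Rightarrow> 'b) \<Rightarrow> bool" where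
  "derivation \<iota> D \<longleftrightarrow>
     (\<forall>a b. D (a + b) = D a + D b) \<and> (\<forall>c a. D (\<iota> c * a) = \<iota> c * D a) \<and>
     (\<forall>a b. D (a * b) = D a * b + a * D b)"

definition poisson_derivation :: "('k::field \<Rightarrow> 'b::comm_ring_1) \<Rightarrow> ('b \<Rightarrow> 'b \<Rightarrow> 'b) \<Rightarrow> ('b \<Rightarrow> 'b) \<Rightarrow> bool" where
  "poisson_derivation \<iota> P D \<longleftrightarrow> derivation \<iota> D \<and> (\<forall>a b. D (P a b) = P (D a) b + P a (D b))"

definition locally_nilpotent :: "('b::zero \<Rightarrow> 'b) \<Rightarrow> bool" where
  "locally_nilpotent D \<longleftrightarrow> (\<forall>b. \<exists>n. (D ^^ n) b = 0)"

text \<open>The Laurent polynomial ring B[x^{+-1}]: Laurent series with finite support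
(the variable is fls_X, its inverse fls_X_inv, B embedded via fls_const).\<close>
definition laurent_polys :: "'b::comm_ring_1 fls set" where
  "laurent_polys = {f. finite {n. fls_nth f n \<noteq> 0}}"

text \<open>B[x^{+-1}; alpha, delta]_p: a Poisson structure on B[x^{+-1}] extending that of B with
{x,b} = alpha(b) x + delta(b).\<close>
definition is_poisson_laurent :: "('k::field \<Rightarrow> 'b::comm_ring_1) \<Rightarrow> ('b \<Rightarrow> 'b \<Rightarrow> 'b) \<Rightarrow>
    ('b \<Rightarrow> 'b) \<Rightarrow> ('b \<Rightarrow> 'b) \<Rightarrow> ('b fls \<Rightarrow> 'b fls \<Rightarrow> 'b fls) \<Rightarrow> bool" where
  "is_poisson_laurent \<iota> P \<alpha> \<delta> Q \<longleftrightarrow>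
     poisson_on laurent_polys (\<lambda>c. fls_const (\<iota> c)) Q \<and>
     (\<forall>a b. Q (fls_const a) (fls_const b) = fls_const (P a b)) \<and>
     (\<forall>b. Q fls_X (fls_const b) = fls_const (\<alpha> b) * fls_X + fls_const (\<delta> b))"

definition poisson_iso_on :: "'b::comm_ring_1 set \<Rightarrow> ('k::field \<Rightarrow> 'b) \<Rightarrow> ('b \<Rightarrow> 'b \<Rightarrow> 'b) \<Rightarrow>
    ('b \<Rightarrow> 'b \<Rightarrow> 'b) \<Rightarrow> ('b \<Rightarrow> 'b) \<Rightarrow> bool" where
  "poisson_iso_on S \<iota> P1 P2 \<Theta> \<longleftrightarrow>
     bij_betw \<Theta> S S \<and> \<Theta> 1 = 1 \<and>
     (\<forall>f\<in>S. \<forall>g\<in>S. \<Theta> (f + g) = \<Theta> f + \<Theta> g \<and> \<Theta> (f * g) = \<Theta> f * \<Theta> g) \<and>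
     (\<forall>c. \<forall>f\<in>S. \<Theta> (\<iota> c * f) = \<iota> c * \<Theta> f) \<and>
     (\<forall>f\<in>S. \<forall>g\<in>S. \<Theta> (P1 f g) = P2 (\<Theta> f) (\<Theta> g))"

text \<open>theta(b) = sum_{n>=0} (1/n!) (-1/s)^n delta^n(b) x^{-n}; the sum is over the (finitely many,
by local nilpotence) n with delta^n(b) nonzero.\<close>
definition theta_map :: "('k::field_char_0 \<Rightarrow> 'b::comm_ring_1) \<Rightarrow> ('b \<Rightarrow> 'b) \<Rightarrow> 'k \<Rightarrow> 'b \<Rightarrow> 'b fls" where
  "theta_map \<iota> \<delta> s b =
     (\<Sum>n | (\<delta> ^^ n) b \<noteq> 0.
        fls_const (\<iota> (inverse (fact n) * (- inverse s) ^ n) * (\<delta> ^^ n) b) * fls_X_inv ^ n)"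

end

theory Submission
  imports Defs
begin

text \<open>The map \<open>\<theta>\<close> is the exponential \<open>exp(-\<delta> x\<^sup>-\<^sup>1 / s)\<close> of the locally nilpotent
  derivation \<open>\<delta>\<close>: the Leibniz rule makes it multiplicative, and the same series with \<open>-s\<close> in place
  of \<open>s\<close> inverts it. Applied coefficientwise and fixing \<open>x\<close>, it becomes a ring automorphism \<open>\<Theta>\<close> of
  \<open>B[x\<^sup>\<plusminus>\<^sup>1]\<close>. Pulling the bracket of \<open>B[x\<^sup>\<plusminus>\<^sup>1; \<alpha>, \<delta>]\<^sub>p\<close> back along \<open>\<Theta>\<close> gives a biderivation, and a
  biderivation of \<open>B[x\<^sup>\<plusminus>\<^sup>1]\<close> is determined by its values on \<open>B\<close> and \<open>x\<close>. So it remains to check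
  \<open>{\<theta>(a), \<theta>(b)} = \<theta>({a, b})\<close>, which holds because \<open>\<delta>\<^sup>k{a, b}\<close> expands by a twisted Leibniz rule,
  and \<open>{x, \<theta>(b)} = \<theta>(\<alpha>(b)) x\<close>, which holds because \<open>\<alpha>\<delta> = \<delta>(\<alpha> + s)\<close> gives
  \<open>\<alpha>\<delta>\<^sup>n = \<delta>\<^sup>n\<alpha> + n s \<delta>\<^sup>n\<close>, so that the \<open>\<delta>\<close>-part of \<open>{x, \<theta>(b)}\<close> telescopes away. Uniqueness holds
  because \<open>B\<close> and \<open>x\<^sup>\<plusminus>\<^sup>1\<close> generate \<open>B[x\<^sup>\<plusminus>\<^sup>1]\<close>.\<close>

section \<open>Laurent polynomials\<close>

lemma fls_X_times_fls_X_inv: "fls_X * fls_X_inv = (1 :: 'a::semiring_1 fls)"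
  using fls_X_intpow_times_fls_X_intpow[of 1 "-1"]
  by (simp add: fls_X_conv_shift_1 fls_X_inv_conv_shift_1)

lemma fls_X_intpow_cases:
  "fls_X_intpow i = (fls_X ^ nat i :: 'a::semiring_1 fls)
   \<or> fls_X_intpow i = (fls_X_inv ^ nat (- i) :: 'a fls)"
  by (cases "0 \<le> i") (simp_all add: fls_X_power_conv_shift_1 fls_X_inv_power_conv_shift_1)

lemma fls_const_sum: "fls_const (\<Sum>x\<in>A. f x) = (\<Sum>x\<in>A. fls_const (f x))"
  by (induction A rule: infinite_finite_induct) (simp_all flip: fls_plus_const)

lemma laurent_polys_monomial: "fls_const c * fls_X_intpow i \<in> laurent_polys"
proof -
  have "{n. fls_nth (fls_const c * fls_X_intpow i) n \<noteq> 0} \<subseteq> {i}" by auto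
  then show ?thesis by (simp add: laurent_polys_def finite_subset)
qed

lemma laurent_polys_const: "fls_const c \<in> laurent_polys"
  using laurent_polys_monomial[of c 0] by simp

lemma laurent_polys_X_intpow: "fls_X_intpow i \<in> laurent_polys"
  using laurent_polys_monomial[of 1 i] by simp

lemma laurent_polys_add:
  assumes "f \<in> laurent_polys" "g \<in> laurent_polys"
  shows "f + g \<in> laurent_polys"
proof -
  have "{n. fls_nth (f + g) n \<noteq> 0} \<subseteq> {n. fls_nth f n \<noteq> 0} \<union> {n. fls_nth g n \<noteq> 0}" by auto
  with assms show ?thesis unfolding laurent_polys_def by (auto intro: finite_subset)
qed

lemma laurent_polys_uminus: "f \<in> laurent_polys \<Longrightarrow> - f \<in> laurent_polys"
  by (simp add: laurent_polys_def)

lemma laurent_polys_sum: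
  "(\<And>x. x \<in> A \<Longrightarrow> g x \<in> laurent_polys) \<Longrightarrow> (\<Sum>x\<in>A. g x) \<in> laurent_polys"
  by (induction A rule: infinite_finite_induct)
    (auto intro: laurent_polys_add laurent_polys_const[of 0, simplified])

lemma laurent_poly_monomial_expansion:
  assumes "f \<in> laurent_polys"
  shows "f = (\<Sum>n | fls_nth f n \<noteq> 0. fls_const (fls_nth f n) * fls_X_intpow n)"
proof (rule fls_eqI)
  fix k
  have "finite {n. fls_nth f n \<noteq> 0}" using assms by (simp add: laurent_polys_def)
  moreover have "fls_nth (fls_const (fls_nth f n) * fls_X_intpow n) k
      = (if n = k then fls_nth f k else 0)" for n
    by simp
  ultimately show
    "fls_nth f k = fls_nth (\<Sum>n | fls_nth f n \<noteq> 0. fls_const (fls_nth f n) * fls_X_intpow n) k"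
    by (simp only: fls_nth_sum) (simp add: sum.delta)
qed

lemma laurent_polys_induct [consumes 1, case_names monomial add]:
  assumes "f \<in> laurent_polys"
    and monomial: "\<And>c i. P (fls_const c * fls_X_intpow i)"
    and add: "\<And>f g. f \<in> laurent_polys \<Longrightarrow> g \<in> laurent_polys \<Longrightarrow> P f \<Longrightarrow> P g \<Longrightarrow> P (f + g)"
  shows "P f"
proof -
  have "P (\<Sum>n\<in>S. fls_const (fls_nth f n) * fls_X_intpow n)" if "finite S" for S
    using that
  proof (induction S rule: finite_induct)
    case empty
    then show ?case using monomial[of 0 0] by simp
  next
    case (insert n S)
    then show ?case
      by (simp only: sum.insert[OF insert.hyps])
        (intro add monomial laurent_polys_monomial laurent_polys_sum)
  qed
  moreover have "finite {n. fls_nth f n \<noteq> 0}" using assms(1) by (simp add: laurent_polys_def)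
  ultimately show ?thesis by (subst laurent_poly_monomial_expansion[OF assms(1)]) blast
qed

lemma monomial_times_monomial:
  "fls_const c * fls_X_intpow i * (fls_const d * fls_X_intpow j)
   = fls_const (c * d) * (fls_X_intpow (i + j) :: 'a::comm_semiring_1 fls)"
proof -
  have "fls_const c * fls_X_intpow i * (fls_const d * fls_X_intpow j)
      = (fls_const c * fls_const d) * (fls_X_intpow i * (fls_X_intpow j :: 'a fls))"
    by (simp only: mult_ac)
  then show ?thesis by (simp only: fls_const_mult_const fls_X_intpow_times_fls_X_intpow)
qed

lemma laurent_polys_mult:
  assumes "f \<in> laurent_polys" "g \<in> laurent_polys"
  shows "f * g \<in> (laurent_polys :: 'a::comm_ring_1 fls set)"
  using assms(1)
proof (induction f rule: laurent_polys_induct)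
  case (monomial c i)
  from assms(2) show ?case
    by (induction g rule: laurent_polys_induct)
      (simp_all only: monomial_times_monomial laurent_polys_monomial distrib_left laurent_polys_add)
qed (simp add: distrib_right laurent_polys_add)

lemma laurent_polys_X: "fls_X \<in> laurent_polys"
  and laurent_polys_X_inv: "fls_X_inv \<in> laurent_polys"
  using laurent_polys_X_intpow[of 1] laurent_polys_X_intpow[of "-1"]
  by (simp_all add: fls_X_conv_shift_1 fls_X_inv_conv_shift_1)

lemma laurent_polys_power: "f \<in> laurent_polys \<Longrightarrow> f ^ n \<in> (laurent_polys :: 'a::comm_ring_1 fls set)"
  using laurent_polys_const[of 1] by (induction n) (auto intro: laurent_polys_mult)

section \<open>Maps on Laurent polynomials determined by their values on generators\<close>

definition laurent_derivation :: "('a::comm_ring_1 fls \<Rightarrow> 'a fls) \<Rightarrow> bool" where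
  "laurent_derivation D \<longleftrightarrow> (\<forall>f\<in>laurent_polys. \<forall>g\<in>laurent_polys.
     D (f + g) = D f + D g \<and> D (f * g) = D f * g + f * D g)"

definition laurent_ring_hom :: "('a::comm_ring_1 fls \<Rightarrow> 'a fls) \<Rightarrow> bool" where
  "laurent_ring_hom \<Theta> \<longleftrightarrow> \<Theta> 1 = 1 \<and> (\<forall>f\<in>laurent_polys. \<forall>g\<in>laurent_polys.
     \<Theta> (f + g) = \<Theta> f + \<Theta> g \<and> \<Theta> (f * g) = \<Theta> f * \<Theta> g)"

lemma laurent_derivation_one:
  assumes "laurent_derivation D"
  shows "D 1 = 0"
proof -
  have "(1 :: 'a fls) \<in> laurent_polys" using laurent_polys_const[of 1] by simp
  then have "D (1 * 1) = D 1 * 1 + 1 * D 1"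
    using assms unfolding laurent_derivation_def by blast
  then show ?thesis by simp
qed

lemma laurent_derivation_X_inv:
  assumes "laurent_derivation D"
  shows "D fls_X_inv = - (fls_X_inv * fls_X_inv) * D fls_X"
proof -
  have "0 = D (fls_X * fls_X_inv)"
    by (simp add: laurent_derivation_one[OF assms] fls_X_times_fls_X_inv)
  also have "\<dots> = D fls_X * fls_X_inv + fls_X * D fls_X_inv"
    using assms laurent_polys_X laurent_polys_X_inv unfolding laurent_derivation_def by blast
  finally have "0 = fls_X_inv * fls_X_inv * D fls_X + (fls_X * fls_X_inv) * D fls_X_inv"
    by (metis (no_types, lifting) distrib_left mult.commute mult.left_commute mult_zero_right)
  then have "fls_X_inv * fls_X_inv * D fls_X + D fls_X_inv = 0"
    by (simp add: fls_X_times_fls_X_inv)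
  from minus_unique[OF this] show ?thesis by simp
qed

lemma laurent_derivation_eqI:
  assumes D1: "laurent_derivation D1" and D2: "laurent_derivation D2"
    and const: "\<And>b. D1 (fls_const b) = D2 (fls_const b)" and X: "D1 fls_X = D2 fls_X"
    and "f \<in> laurent_polys"
  shows "D1 f = D2 f"
  using assms(5)
proof (induction f rule: laurent_polys_induct)
  case (monomial c i)
  have leibniz: "D (f * g) = D f * g + f * D g"
    if "laurent_derivation D" "f \<in> laurent_polys" "g \<in> laurent_polys" for D f g
    using that unfolding laurent_derivation_def by blast
  have X_inv: "D1 fls_X_inv = D2 fls_X_inv"
    using laurent_derivation_X_inv[OF D1] laurent_derivation_X_inv[OF D2] X by simp
  have "D1 (fls_X ^ n) = D2 (fls_X ^ n)" "D1 (fls_X_inv ^ n) = D2 (fls_X_inv ^ n)" for n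
    by (induction n) (simp_all add: laurent_derivation_one D1 D2 leibniz laurent_polys_X
        laurent_polys_X_inv laurent_polys_power X X_inv)
  then have "D1 (fls_X_intpow i) = D2 (fls_X_intpow i)"
    using fls_X_intpow_cases[of i] by metis
  then show ?case
    by (simp add: leibniz D1 D2 laurent_polys_const laurent_polys_X_intpow const)
next
  case (add f g)
  then show ?case using D1 D2 unfolding laurent_derivation_def by simp
qed

lemma laurent_ring_hom_eqI:
  assumes H1: "laurent_ring_hom \<Theta>1" and H2: "laurent_ring_hom \<Theta>2"
    and const: "\<And>b. \<Theta>1 (fls_const b) = \<Theta>2 (fls_const b)" and X: "\<Theta>1 fls_X = \<Theta>2 fls_X"
    and "f \<in> laurent_polys"
  shows "\<Theta>1 f = \<Theta>2 f"
  using assms(5)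
proof (induction f rule: laurent_polys_induct)
  case (monomial c i)
  have mult: "\<Theta> (f * g) = \<Theta> f * \<Theta> g"
    if "laurent_ring_hom \<Theta>" "f \<in> laurent_polys" "g \<in> laurent_polys" for \<Theta> f g
    using that unfolding laurent_ring_hom_def by blast
  have one: "\<Theta>1 1 = 1" "\<Theta>2 1 = 1" using H1 H2 unfolding laurent_ring_hom_def by blast+
  have inv: "\<Theta> fls_X * \<Theta> fls_X_inv = 1" if "laurent_ring_hom \<Theta>" for \<Theta>
    using mult[OF that laurent_polys_X laurent_polys_X_inv] that
    by (simp add: fls_X_times_fls_X_inv laurent_ring_hom_def)
  have X_inv: "\<Theta>1 fls_X_inv = \<Theta>2 fls_X_inv"
    using inv[OF H1] inv[OF H2] X by (metis mult.left_commute mult.right_neutral mult.commute)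
  have "\<Theta>1 (fls_X ^ n) = \<Theta>2 (fls_X ^ n)" "\<Theta>1 (fls_X_inv ^ n) = \<Theta>2 (fls_X_inv ^ n)" for n
    by (induction n) (simp_all add: one mult H1 H2 laurent_polys_X laurent_polys_X_inv
        laurent_polys_power X X_inv)
  then have "\<Theta>1 (fls_X_intpow i) = \<Theta>2 (fls_X_intpow i)"
    using fls_X_intpow_cases[of i] by metis
  then show ?case
    by (simp add: mult H1 H2 laurent_polys_const laurent_polys_X_intpow const)
next
  case (add f g)
  then show ?case using H1 H2 unfolding laurent_ring_hom_def by simp
qed

lemma poisson_iso_on_imp_laurent_ring_hom:
  "poisson_iso_on laurent_polys \<iota> P1 P2 \<Theta> \<Longrightarrow> laurent_ring_hom \<Theta>"
  by (simp add: poisson_iso_on_def laurent_ring_hom_def)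

section \<open>Binomial bookkeeping\<close>

lemma sum_square_eq_sum_diagonals:
  fixes F :: "nat \<Rightarrow> nat \<Rightarrow> 'a::comm_monoid_add"
  assumes "\<And>m n. N \<le> m \<or> N \<le> n \<Longrightarrow> F m n = 0"
  shows "(\<Sum>m<N. \<Sum>n<N. F m n) = (\<Sum>k<2*N. \<Sum>m\<le>k. F m (k - m))"
proof -
  have "(\<Sum>m<N. \<Sum>n<N. F m n) = (\<Sum>(m,n)\<in>{..<N}\<times>{..<N}. F m n)"
    by (simp add: sum.cartesian_product)
  also have "\<dots> = (\<Sum>(m,n)\<in>{(i,j). i + j < 2*N}. F m n)"
  proof (rule sum.mono_neutral_left)
    have "{(i,j). i + j < 2*N} \<subseteq> {..<2*N}\<times>{..<2*N}" by auto
    then show "finite {(i,j). i + j < 2*N}" by (rule finite_subset) simp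
  qed (auto, (metis assms not_le)+)
  also have "\<dots> = (\<Sum>k<2*N. \<Sum>m\<le>k. F m (k - m))"
    by (rule sum.triangle_reindex)
  finally show ?thesis .
qed

lemma fls_X_inv_power_sum_square:
  assumes "\<And>m n. N \<le> m \<or> N \<le> n \<Longrightarrow> F m n = 0"
  shows "(\<Sum>m<N. \<Sum>n<N. fls_const (F m n) * fls_X_inv ^ (m + n))
       = (\<Sum>k<2*N. fls_const (\<Sum>m\<le>k. F m (k - m)) * (fls_X_inv ^ k :: 'a::comm_ring_1 fls))"
proof -
  have "(\<Sum>m<N. \<Sum>n<N. fls_const (F m n) * fls_X_inv ^ (m + n))
      = (\<Sum>k<2*N. \<Sum>m\<le>k. fls_const (F m (k - m)) * (fls_X_inv ^ (m + (k - m)) :: 'a fls))"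
    by (rule sum_square_eq_sum_diagonals) (use assms in auto)
  also have "\<dots> = (\<Sum>k<2*N. \<Sum>m\<le>k. fls_const (F m (k - m)) * fls_X_inv ^ k)"
    by (intro sum.cong refl) auto
  finally show ?thesis
    by (simp add: fls_const_sum sum_distrib_right)
qed

lemma sum_lessThan_shift_vanishing:
  fixes f :: "nat \<Rightarrow> 'a::comm_monoid_add"
  assumes "f 0 = 0" "f N = 0"
  shows "(\<Sum>n<N. f n) = (\<Sum>n<N. f (Suc n))"
  using sum.lessThan_Suc_shift[of f N] assms by simp

lemma sum_binomial_pascal:
  fixes G :: "nat \<Rightarrow> nat \<Rightarrow> 'a::comm_ring_1"
  shows "(\<Sum>m\<le>k. of_nat (k choose m) * G (Suc m) (k - m))
       + (\<Sum>m\<le>k. of_nat (k choose m) * G m (Suc (k - m)))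
       = (\<Sum>m\<le>Suc k. of_nat (Suc k choose m) * G m (Suc k - m))"
proof -
  define f where "f m = of_nat (k choose m) * G m (Suc k - m)" for m
  have A: "(\<Sum>m\<le>k. of_nat (k choose m) * G m (Suc (k - m))) = (\<Sum>m\<le>k. f m)"
    by (rule sum.cong) (auto simp: f_def Suc_diff_le)
  have "(\<Sum>m\<le>k. f m) = f 0 + (\<Sum>m\<le>k. f (Suc m))"
    using sum.atMost_Suc_shift[of f k] by (simp add: f_def binomial_eq_0)
  moreover have "(\<Sum>m\<le>k. f (Suc m)) = (\<Sum>m\<le>k. of_nat (k choose Suc m) * G (Suc m) (k - m))"
    by (rule sum.cong) (auto simp: f_def binomial_eq_0)
  moreover have "(\<Sum>m\<le>Suc k. of_nat (Suc k choose m) * G m (Suc k - m))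
      = G 0 (Suc k) + (\<Sum>m\<le>k. of_nat (k choose m) * G (Suc m) (k - m))
      + (\<Sum>m\<le>k. of_nat (k choose Suc m) * G (Suc m) (k - m))"
    by (subst sum.atMost_Suc_shift) (simp add: sum.distrib distrib_right)
  ultimately show ?thesis using A by (simp add: f_def)
qed

lemma sum_binomial_absorption_cancel:
  fixes H :: "nat \<Rightarrow> nat \<Rightarrow> 'a::comm_ring_1"
  shows "(\<Sum>m\<le>k. of_nat (k choose m) *
           (of_nat m * H m (Suc (k - m)) - of_nat (k - m) * H (Suc m) (k - m))) = 0"
proof -
  define f where "f m = of_nat (k choose m) * of_nat m * H m (Suc k - m)" for m
  have A: "(\<Sum>m\<le>k. of_nat (k choose m) * (of_nat m * H m (Suc (k - m)))) = (\<Sum>m\<le>k. f m)"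
    by (rule sum.cong) (auto simp: f_def Suc_diff_le mult.assoc)
  have "(\<Sum>m\<le>k. f m) = (\<Sum>m\<le>k. f (Suc m))"
    using sum.atMost_Suc_shift[of f k] by (simp add: f_def binomial_eq_0)
  also have "\<dots> = (\<Sum>m\<le>k. of_nat (k choose m) * (of_nat (k - m) * H (Suc m) (k - m)))"
  proof (rule sum.cong)
    fix m
    have "(k choose Suc m) * Suc m = (k choose m) * (k - m)"
      using binomial_absorption[of m k] binomial_absorb_comp[of k m] by (simp add: mult.commute)
    then have "of_nat (k choose Suc m) * of_nat (Suc m) = (of_nat (k choose m) * of_nat (k - m) :: 'a)"
      by (metis of_nat_mult)
    then show "f (Suc m) = of_nat (k choose m) * (of_nat (k - m) * H (Suc m) (k - m))"
      by (simp add: f_def mult.assoc del: of_nat_Suc)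
  qed simp
  finally show ?thesis using A by (simp add: right_diff_distrib sum_subtractf)
qed

definition theta_coeff :: "'k::field_char_0 \<Rightarrow> nat \<Rightarrow> 'k" where
  "theta_coeff s n = inverse (fact n) * (- inverse s) ^ n"

lemma theta_coeff_mult:
  assumes "m \<le> k"
  shows "theta_coeff s m * theta_coeff s' (k - m)
       = inverse (fact k) * of_nat (k choose m) * (- inverse s) ^ m * (- inverse s') ^ (k - m)"
proof -
  have "inverse (fact m) * inverse (fact (k - m)) = inverse (fact k) * (of_nat (k choose m) :: 'a)"
    unfolding binomial_fact[OF assms] by (simp add: field_simps)
  moreover have "theta_coeff s m * theta_coeff s' (k - m)
      = inverse (fact m) * inverse (fact (k - m)) * (- inverse s) ^ m * (- inverse s') ^ (k - m)"
    by (simp add: theta_coeff_def mult_ac)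
  ultimately show ?thesis by (metis mult.assoc)
qed

lemma theta_coeff_mult_same:
  assumes "m \<le> k"
  shows "theta_coeff s m * theta_coeff s (k - m) = theta_coeff s k * of_nat (k choose m)"
proof -
  have "(- inverse s) ^ m * (- inverse s) ^ (k - m) = (- inverse s) ^ k"
    using assms by (simp flip: power_add)
  then show ?thesis
    using theta_coeff_mult[OF assms, of s s] unfolding theta_coeff_def by (simp add: mult_ac)
qed

lemma sum_theta_coeff_opposite:
  "(\<Sum>m\<le>k. theta_coeff (- s) m * theta_coeff s (k - m)) = (if k = 0 then 1 else 0)"
proof -
  have "(\<Sum>m\<le>k. theta_coeff (- s) m * theta_coeff s (k - m))
      = inverse (fact k) * (\<Sum>m\<le>k. of_nat (k choose m) * inverse s ^ m * (- inverse s) ^ (k - m))"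
    by (simp add: sum_distrib_left theta_coeff_mult mult_ac)
  also have "\<dots> = inverse (fact k) * (inverse s + - inverse s) ^ k"
    by (simp only: binomial_ring)
  finally show ?thesis by simp
qed

lemma theta_coeff_Suc:
  assumes "s \<noteq> 0"
  shows "theta_coeff s (Suc n) * (of_nat (Suc n) * s) = - theta_coeff s n"
  using assms by (simp add: theta_coeff_def field_simps del: of_nat_Suc)

section \<open>The map \<open>\<theta>\<close> on \<open>B\<close>\<close>

locale k_algebra =
  fixes \<iota> :: "'k::field_char_0 \<Rightarrow> 'b::comm_ring_1"
  assumes hom: "k_algebra_hom \<iota>"
begin

lemma iota_one [simp]: "\<iota> 1 = 1"
  and iota_add: "\<iota> (c + d) = \<iota> c + \<iota> d"
  and iota_mult: "\<iota> (c * d) = \<iota> c * \<iota> d"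
  using hom unfolding k_algebra_hom_def by auto

sublocale iota: additive \<iota>
  by unfold_locales (rule iota_add)

lemma iota_of_nat [simp]: "\<iota> (of_nat n) = of_nat n"
  by (induction n) (simp_all add: iota.zero iota_add)

lemma fls_double_eq_0:
  assumes "x + x = (0 :: 'b fls)"
  shows "x = 0"
proof -
  have "\<iota> (inverse 2) * 2 = 1"
    using iota_mult[of "inverse 2" 2] iota_of_nat[of 2] by simp
  then have "x = fls_const (\<iota> (inverse 2)) * (fls_const 2 * x)"
    by (simp only: mult.assoc[symmetric] fls_const_mult_const fls_const_1 mult_1_left)
  also have "fls_const 2 * x = x + x"
    by (simp only: fls_const_numeral mult_2)
  finally show ?thesis using assms by simp
qed

end

locale lnd_algebra = k_algebra \<iota> for \<iota> :: "'k::field_char_0 \<Rightarrow> 'b::comm_ring_1" +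
  fixes \<delta> :: "'b \<Rightarrow> 'b"
  assumes derivation: "derivation \<iota> \<delta>" and locally_nilpotent: "locally_nilpotent \<delta>"
begin

lemma delta_add: "\<delta> (a + b) = \<delta> a + \<delta> b"
  and delta_iota_mult: "\<delta> (\<iota> c * a) = \<iota> c * \<delta> a"
  and delta_mult: "\<delta> (a * b) = \<delta> a * b + a * \<delta> b"
  using derivation unfolding derivation_def by auto

sublocale delta: additive \<delta>
  by unfold_locales (rule delta_add)

lemma delta_iota: "\<delta> (\<iota> c) = 0"
  using delta_iota_mult[of c 1] delta_mult[of 1 1] by simp

lemma delta_of_nat: "\<delta> (of_nat n) = 0"
  using delta_iota[of "of_nat n"] by simp

lemma delta_of_nat_mult: "\<delta> (of_nat n * a) = of_nat n * \<delta> a"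
  using delta_iota_mult[of "of_nat n" a] by simp

lemma additive_funpow_delta: "additive (\<delta> ^^ n)"
  by unfold_locales (induction n, simp_all add: delta_add)

lemma funpow_delta_eq_0_mono:
  assumes "(\<delta> ^^ N) b = 0" "N \<le> m"
  shows "(\<delta> ^^ m) b = 0"
proof -
  obtain j where "m = j + N" using assms(2) le_Suc_ex add.commute by metis
  then show ?thesis using assms(1) by (simp add: funpow_add additive.zero[OF additive_funpow_delta])
qed

lemma ex_nilpotency_bound: "\<exists>N. \<forall>m\<ge>N. (\<delta> ^^ m) a = 0 \<and> (\<delta> ^^ m) b = 0"
proof -
  obtain Na Nb where "(\<delta> ^^ Na) a = 0" "(\<delta> ^^ Nb) b = 0"
    using locally_nilpotent unfolding locally_nilpotent_def by blast
  then show ?thesis by (metis funpow_delta_eq_0_mono le_add1 le_add2 order.trans)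
qed

lemma funpow_delta_binomial:
  assumes step: "\<And>m n. \<delta> (G m n) = G (Suc m) n + G m (Suc n) + E m n"
    and cancel: "\<And>k. (\<Sum>m\<le>k. of_nat (k choose m) * E m (k - m)) = 0"
  shows "(\<delta> ^^ k) (G 0 0) = (\<Sum>m\<le>k. of_nat (k choose m) * G m (k - m))"
proof (induction k)
  case (Suc k)
  have "(\<delta> ^^ Suc k) (G 0 0) = (\<Sum>m\<le>k. of_nat (k choose m) * \<delta> (G m (k - m)))"
    by (simp add: Suc delta.sum delta_of_nat_mult)
  also have "\<dots> = (\<Sum>m\<le>k. of_nat (k choose m) * G (Suc m) (k - m))
     + (\<Sum>m\<le>k. of_nat (k choose m) * G m (Suc (k - m)))
     + (\<Sum>m\<le>k. of_nat (k choose m) * E m (k - m))"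
    by (simp add: step distrib_left sum.distrib)
  also have "\<dots> = (\<Sum>m\<le>Suc k. of_nat (Suc k choose m) * G m (Suc k - m))"
    by (simp add: cancel sum_binomial_pascal)
  finally show ?case .
qed simp

lemma funpow_delta_mult:
  "(\<delta> ^^ k) (a * b) = (\<Sum>m\<le>k. of_nat (k choose m) * ((\<delta> ^^ m) a * (\<delta> ^^ (k - m)) b))"
  using funpow_delta_binomial[where G = "\<lambda>m n. (\<delta> ^^ m) a * (\<delta> ^^ n) b" and E = "\<lambda>_ _. 0"]
  by (simp add: delta_mult)

abbreviation \<theta> :: "'k \<Rightarrow> 'b \<Rightarrow> 'b fls" where
  "\<theta> s \<equiv> theta_map \<iota> \<delta> s"

lemma theta_map_eq_sum_lessThan:
  assumes "(\<delta> ^^ N) b = 0"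
  shows "\<theta> s b = (\<Sum>n<N. fls_const (\<iota> (theta_coeff s n) * (\<delta> ^^ n) b) * fls_X_inv ^ n)"
  unfolding theta_map_def theta_coeff_def
proof (rule sum.mono_neutral_left)
  show "{n. (\<delta> ^^ n) b \<noteq> 0} \<subseteq> {..<N}"
    using funpow_delta_eq_0_mono[OF assms] by (auto simp: not_less[symmetric])
qed simp_all

lemma theta_map_add: "\<theta> s (a + b) = \<theta> s a + \<theta> s b"
proof -
  obtain N where a: "(\<delta> ^^ N) a = 0" and b: "(\<delta> ^^ N) b = 0"
    using ex_nilpotency_bound by blast
  then have ab: "(\<delta> ^^ N) (a + b) = 0"
    by (simp add: additive.add[OF additive_funpow_delta])
  show ?thesis
    unfolding theta_map_eq_sum_lessThan[OF a] theta_map_eq_sum_lessThan[OF b]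
      theta_map_eq_sum_lessThan[OF ab]
    by (simp add: additive.add[OF additive_funpow_delta] distrib_left distrib_right sum.distrib
        flip: fls_plus_const)
qed

lemma sum_square_theta_coeff:
  assumes vanish: "\<And>m n. N \<le> m \<or> N \<le> n \<Longrightarrow> G m n = 0"
    and expansion: "\<And>k. (\<delta> ^^ k) g = (\<Sum>m\<le>k. of_nat (k choose m) * G m (k - m))"
  shows "(\<Sum>m<N. \<Sum>n<N. fls_const (\<iota> (theta_coeff s m * theta_coeff s n) * G m n)
           * fls_X_inv ^ (m + n)) = \<theta> s g"
proof -
  have "(\<delta> ^^ (2 * N)) g = 0"
    unfolding expansion
  proof (rule sum.neutral, intro ballI)
    fix m assume "m \<in> {..2 * N}"
    then have "N \<le> m \<or> N \<le> 2 * N - m" by auto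
    then show "of_nat (2 * N choose m) * G m (2 * N - m) = 0" by (simp add: vanish)
  qed
  moreover have "(\<Sum>m\<le>k. \<iota> (theta_coeff s m * theta_coeff s (k - m)) * G m (k - m))
      = \<iota> (theta_coeff s k) * (\<delta> ^^ k) g" for k
    by (simp add: expansion sum_distrib_left theta_coeff_mult_same iota_mult mult_ac)
  ultimately show ?thesis
    by (simp add: fls_X_inv_power_sum_square vanish theta_map_eq_sum_lessThan)
qed

lemma sum_square_theta_coeff_telescope:
  assumes s: "s \<noteq> 0" and u: "\<And>m. N \<le> m \<Longrightarrow> u m = 0" and v: "\<And>n. N \<le> n \<Longrightarrow> v n = 0"
  shows "(\<Sum>m<N. \<Sum>n<N. fls_const (\<iota> (theta_coeff s m * theta_coeff s n)
           * (of_nat n * (u (Suc m) * v n) - of_nat m * (u m * v (Suc n)))) * fls_X_inv ^ (m + n + 1))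
       = 0"
proof -
  define W where "W m n = fls_const (\<iota> (theta_coeff s m * theta_coeff s n
      * (of_nat m * of_nat n * - s)) * (u m * v n)) * fls_X_inv ^ (m + n)" for m n
  have Suc_left: "theta_coeff s (Suc m) * theta_coeff s n * (of_nat (Suc m) * of_nat n * - s)
      = theta_coeff s m * theta_coeff s n * of_nat n" for m n
  proof -
    have "theta_coeff s (Suc m) * theta_coeff s n * (of_nat (Suc m) * of_nat n * - s)
        = - (theta_coeff s (Suc m) * (of_nat (Suc m) * s)) * (theta_coeff s n * of_nat n)"
      by (simp only: mult_ac mult_minus_left mult_minus_right)
    also have "\<dots> = theta_coeff s m * theta_coeff s n * of_nat n"
      unfolding theta_coeff_Suc[OF s] by (simp add: mult_ac)
    finally show ?thesis .
  qed
  have "theta_coeff s m * theta_coeff s (Suc n) * (of_nat m * of_nat (Suc n) * - s)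
      = theta_coeff s m * theta_coeff s n * of_nat m" for m n
    using Suc_left[of n m] by (simp only: mult_ac)
  with Suc_left have "fls_const (\<iota> (theta_coeff s m * theta_coeff s n)
      * (of_nat n * (u (Suc m) * v n) - of_nat m * (u m * v (Suc n)))) * fls_X_inv ^ (m + n + 1)
      = W (Suc m) n - W m (Suc n)" for m n
    by (simp add: W_def iota_mult algebra_simps del: of_nat_Suc flip: fls_minus_const)
  moreover have "(\<Sum>m<N. \<Sum>n<N. W (Suc m) n) = (\<Sum>m<N. \<Sum>n<N. W m n)"
    by (rule sum_lessThan_shift_vanishing[symmetric]) (simp_all add: W_def u iota.zero)
  moreover have "(\<Sum>m<N. \<Sum>n<N. W m (Suc n)) = (\<Sum>m<N. \<Sum>n<N. W m n)"
    by (intro sum.cong refl sum_lessThan_shift_vanishing[symmetric])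
      (simp_all add: W_def v iota.zero)
  ultimately show ?thesis by (simp add: sum_subtractf)
qed

lemma theta_map_mult: "\<theta> s (a * b) = \<theta> s a * \<theta> s b"
proof -
  obtain N where N: "\<forall>m\<ge>N. (\<delta> ^^ m) a = 0 \<and> (\<delta> ^^ m) b = 0"
    using ex_nilpotency_bound by blast
  have "\<theta> s a * \<theta> s b = (\<Sum>m<N. \<Sum>n<N.
      fls_const (\<iota> (theta_coeff s m) * (\<delta> ^^ m) a) * fls_X_inv ^ m
      * (fls_const (\<iota> (theta_coeff s n) * (\<delta> ^^ n) b) * fls_X_inv ^ n))"
    using N by (simp add: theta_map_eq_sum_lessThan[of N] sum_product)
  also have "\<dots> = (\<Sum>m<N. \<Sum>n<N. fls_const (\<iota> (theta_coeff s m * theta_coeff s n)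
      * ((\<delta> ^^ m) a * (\<delta> ^^ n) b)) * fls_X_inv ^ (m + n))"
    by (intro sum.cong refl) (simp add: iota_mult power_add mult_ac flip: fls_const_mult_const)
  also have "\<dots> = \<theta> s (a * b)"
    using N by (intro sum_square_theta_coeff funpow_delta_mult) auto
  finally show ?thesis ..
qed

lemma theta_map_iota: "\<theta> s (\<iota> c) = fls_const (\<iota> c)"
  using theta_map_eq_sum_lessThan[of 1 "\<iota> c"] by (simp add: delta_iota theta_coeff_def)

lemma theta_map_one: "\<theta> s 1 = 1"
  using theta_map_iota[of s 1] by simp

lemma theta_map_zero: "\<theta> s 0 = 0"
  using theta_map_add[of s 0 0] by simp

lemma theta_map_in_laurent_polys: "\<theta> s b \<in> laurent_polys"
proof -
  obtain N where "(\<delta> ^^ N) b = 0"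
    using locally_nilpotent unfolding locally_nilpotent_def by blast
  then show ?thesis
    by (simp add: theta_map_eq_sum_lessThan laurent_polys_sum laurent_polys_mult
        laurent_polys_const laurent_polys_power laurent_polys_X_inv)
qed

end

section \<open>The extension \<open>\<Theta>\<close> of \<open>\<theta>\<close> to \<open>B[x\<^sup>\<plusminus>\<^sup>1]\<close>\<close>

definition theta_laurent ::
    "('k::field_char_0 \<Rightarrow> 'b::comm_ring_1) \<Rightarrow> ('b \<Rightarrow> 'b) \<Rightarrow> 'k \<Rightarrow> 'b fls \<Rightarrow> 'b fls" where
  "theta_laurent \<iota> \<delta> s f =
     (\<Sum>n | fls_nth f n \<noteq> 0. theta_map \<iota> \<delta> s (fls_nth f n) * fls_X_intpow n)"

context lnd_algebra
begin

abbreviation \<Theta> :: "'k \<Rightarrow> 'b fls \<Rightarrow> 'b fls" where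
  "\<Theta> s \<equiv> theta_laurent \<iota> \<delta> s"

lemma theta_laurent_eq_sum_superset:
  assumes "finite F" "{n. fls_nth f n \<noteq> 0} \<subseteq> F"
  shows "\<Theta> s f = (\<Sum>n\<in>F. \<theta> s (fls_nth f n) * fls_X_intpow n)"
  unfolding theta_laurent_def by (rule sum.mono_neutral_left[OF assms]) (simp add: theta_map_zero)

lemma theta_laurent_in_laurent_polys: "\<Theta> s f \<in> laurent_polys"
  unfolding theta_laurent_def
  by (intro laurent_polys_sum laurent_polys_mult theta_map_in_laurent_polys laurent_polys_X_intpow)

lemma theta_laurent_add:
  assumes "f \<in> laurent_polys" "g \<in> laurent_polys"
  shows "\<Theta> s (f + g) = \<Theta> s f + \<Theta> s g"
proof -
  define F where "F = {n. fls_nth f n \<noteq> 0} \<union> {n. fls_nth g n \<noteq> 0}"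
  have F: "finite F" using assms by (simp add: F_def laurent_polys_def)
  have "\<Theta> s (f + g) = (\<Sum>n\<in>F. \<theta> s (fls_nth (f + g) n) * fls_X_intpow n)"
    by (rule theta_laurent_eq_sum_superset[OF F]) (auto simp: F_def)
  also have "\<dots> = \<Theta> s f + \<Theta> s g"
    by (simp add: theta_laurent_eq_sum_superset[OF F, of f]
        theta_laurent_eq_sum_superset[OF F, of g] F_def theta_map_add distrib_right sum.distrib)
  finally show ?thesis .
qed

lemma theta_laurent_monomial: "\<Theta> s (fls_const c * fls_X_intpow i) = \<theta> s c * fls_X_intpow i"
proof -
  have "{n. fls_nth (fls_const c * fls_X_intpow i) n \<noteq> 0} \<subseteq> {i}" by auto
  from theta_laurent_eq_sum_superset[OF _ this] show ?thesis by simp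
qed

lemma theta_laurent_const: "\<Theta> s (fls_const b) = \<theta> s b"
  using theta_laurent_monomial[of s b 0] by simp

lemma theta_laurent_X_intpow: "\<Theta> s (fls_X_intpow i) = fls_X_intpow i"
  using theta_laurent_monomial[of s 1 i] by (simp add: theta_map_one)

lemma theta_laurent_X: "\<Theta> s fls_X = fls_X"
  and theta_laurent_X_inv: "\<Theta> s fls_X_inv = fls_X_inv"
  using theta_laurent_X_intpow[of s 1] theta_laurent_X_intpow[of s "-1"]
  by (simp_all add: fls_X_conv_shift_1 fls_X_inv_conv_shift_1)

lemma theta_laurent_mult:
  assumes "f \<in> laurent_polys" "g \<in> laurent_polys"
  shows "\<Theta> s (f * g) = \<Theta> s f * \<Theta> s g"
  using assms(1)
proof (induction f rule: laurent_polys_induct)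
  case (monomial c i)
  from assms(2) show ?case
  proof (induction g rule: laurent_polys_induct)
    case (monomial d j)
    show ?case
      by (simp only: monomial_times_monomial theta_laurent_monomial theta_map_mult)
        (simp only: fls_X_intpow_times_fls_X_intpow[symmetric] mult_ac)
  next
    case (add g h)
    then show ?case
      by (simp add: distrib_left theta_laurent_add laurent_polys_mult laurent_polys_monomial)
  qed
next
  case (add f1 f2)
  then show ?case by (simp add: distrib_right theta_laurent_add laurent_polys_mult assms(2))
qed

lemma theta_laurent_one: "\<Theta> s 1 = 1"
  using theta_laurent_X_intpow[of s 0] by simp

lemma laurent_ring_hom_theta_laurent: "laurent_ring_hom (\<Theta> s)"
  by (simp add: laurent_ring_hom_def theta_laurent_one theta_laurent_add theta_laurent_mult)

lemma theta_laurent_uminus: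
  assumes "f \<in> laurent_polys"
  shows "\<Theta> s (- f) = - \<Theta> s f"
  using theta_laurent_add[OF assms laurent_polys_uminus[OF assms], of s]
    minus_unique[of "\<Theta> s f" "\<Theta> s (- f)"]
  by (simp add: theta_laurent_eq_sum_superset[of "{}"])

lemma theta_laurent_sum:
  "(\<And>x. x \<in> A \<Longrightarrow> g x \<in> laurent_polys) \<Longrightarrow> \<Theta> s (\<Sum>x\<in>A. g x) = (\<Sum>x\<in>A. \<Theta> s (g x))"
  by (induction A rule: infinite_finite_induct)
    (simp_all add: theta_laurent_add laurent_polys_sum theta_laurent_eq_sum_superset[of "{}"])

lemma theta_laurent_power:
  "f \<in> laurent_polys \<Longrightarrow> \<Theta> s (f ^ n) = \<Theta> s f ^ n"
  by (induction n) (simp_all add: theta_laurent_one theta_laurent_mult laurent_polys_power)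

lemma theta_laurent_theta_map_opposite: "\<Theta> (- s) (\<theta> s c) = fls_const c"
proof -
  obtain N0 where "\<forall>m\<ge>N0. (\<delta> ^^ m) c = 0"
    using ex_nilpotency_bound by blast
  then obtain N where N: "\<forall>m\<ge>N. (\<delta> ^^ m) c = 0" and "0 < N"
    by (metis Suc_leD zero_less_Suc)
  then have N': "(\<delta> ^^ N) ((\<delta> ^^ n) c) = 0" for n
    by (metis funpow_add comp_apply le_add1)
  have monomial_in: "fls_const e * fls_X_inv ^ n \<in> laurent_polys" for e n
    by (intro laurent_polys_mult laurent_polys_const laurent_polys_power laurent_polys_X_inv)
  have "\<Theta> (- s) (\<theta> s c)
      = (\<Sum>n<N. \<theta> (- s) (\<iota> (theta_coeff s n) * (\<delta> ^^ n) c) * fls_X_inv ^ n)"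
    using N by (simp add: theta_map_eq_sum_lessThan[of N] theta_laurent_sum monomial_in
        theta_laurent_mult laurent_polys_const laurent_polys_power laurent_polys_X_inv
        theta_laurent_power theta_laurent_const theta_laurent_X_inv)
  also have "\<dots> = (\<Sum>n<N. fls_const (\<iota> (theta_coeff s n)) * (\<Sum>m<N.
      fls_const (\<iota> (theta_coeff (- s) m) * (\<delta> ^^ m) ((\<delta> ^^ n) c)) * fls_X_inv ^ m)
      * fls_X_inv ^ n)"
    by (simp add: theta_map_mult theta_map_iota theta_map_eq_sum_lessThan[OF N'])
  also have "\<dots> = (\<Sum>n<N. \<Sum>m<N. fls_const (\<iota> (theta_coeff (- s) m * theta_coeff s n)
      * (\<delta> ^^ (m + n)) c) * fls_X_inv ^ (m + n))"
    by (simp add: sum_distrib_left sum_distrib_right funpow_add iota_mult power_add mult_ac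
        flip: fls_const_mult_const)
  also have "\<dots> = (\<Sum>k<2*N. fls_const (\<Sum>m\<le>k. \<iota> (theta_coeff (- s) m * theta_coeff s (k - m))
      * (\<delta> ^^ k) c) * fls_X_inv ^ k)"
    by (subst sum.swap, subst fls_X_inv_power_sum_square) (auto simp: N)
  also have "\<dots> = (\<Sum>k<2*N. if k = 0 then fls_const c else 0)"
    by (intro sum.cong refl)
      (simp add: sum_distrib_right[symmetric] iota.sum[symmetric] sum_theta_coeff_opposite
        iota.zero)
  also have "\<dots> = fls_const c"
    using \<open>0 < N\<close> by simp
  finally show ?thesis .
qed

lemma theta_laurent_opposite_inverse:
  "f \<in> laurent_polys \<Longrightarrow> \<Theta> (- s) (\<Theta> s f) = f"
proof (induction f rule: laurent_polys_induct)
  case (monomial c i)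
  show ?case
    by (simp add: theta_laurent_monomial theta_laurent_mult theta_map_in_laurent_polys
        laurent_polys_X_intpow theta_laurent_theta_map_opposite theta_laurent_X_intpow)
next
  case (add f g)
  then show ?case by (simp add: theta_laurent_add theta_laurent_in_laurent_polys)
qed

lemma bij_betw_theta_laurent: "bij_betw (\<Theta> s) laurent_polys laurent_polys"
  using theta_laurent_opposite_inverse[of _ s] theta_laurent_opposite_inverse[of _ "- s"]
  by (intro bij_betw_byWitness[where f' = "\<Theta> (- s)"]) (auto simp: theta_laurent_in_laurent_polys)

end

section \<open>Poisson brackets on Laurent polynomials\<close>

locale laurent_poisson = k_algebra \<iota> for \<iota> :: "'k::field_char_0 \<Rightarrow> 'b::comm_ring_1" +
  fixes Q :: "'b fls \<Rightarrow> 'b fls \<Rightarrow> 'b fls"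
  assumes poisson: "poisson_on laurent_polys (\<lambda>c. fls_const (\<iota> c)) Q"
begin

lemma bracket_closed: "f \<in> laurent_polys \<Longrightarrow> g \<in> laurent_polys \<Longrightarrow> Q f g \<in> laurent_polys"
  and bracket_add_left: "f \<in> laurent_polys \<Longrightarrow> g \<in> laurent_polys \<Longrightarrow> h \<in> laurent_polys \<Longrightarrow>
    Q (f + g) h = Q f h + Q g h"
  and bracket_antisym: "f \<in> laurent_polys \<Longrightarrow> g \<in> laurent_polys \<Longrightarrow> Q f g = - Q g f"
  and bracket_mult_right: "f \<in> laurent_polys \<Longrightarrow> g \<in> laurent_polys \<Longrightarrow> h \<in> laurent_polys \<Longrightarrow>
    Q f (g * h) = Q f g * h + g * Q f h"
  using poisson unfolding poisson_on_def by blast+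

lemma bracket_add_right:
  "f \<in> laurent_polys \<Longrightarrow> g \<in> laurent_polys \<Longrightarrow> h \<in> laurent_polys \<Longrightarrow> Q f (g + h) = Q f g + Q f h"
  by (simp add: bracket_antisym[of f] bracket_add_left laurent_polys_add)

lemma bracket_mult_left:
  "f \<in> laurent_polys \<Longrightarrow> g \<in> laurent_polys \<Longrightarrow> h \<in> laurent_polys \<Longrightarrow>
    Q (g * h) f = Q g f * h + g * Q h f"
  by (simp add: bracket_antisym[of _ f] bracket_mult_right laurent_polys_mult algebra_simps)

lemma laurent_derivation_bracket: "f \<in> laurent_polys \<Longrightarrow> laurent_derivation (Q f)"
  by (simp add: laurent_derivation_def bracket_add_right bracket_mult_right)

lemma bracket_self:
  assumes "f \<in> laurent_polys"
  shows "Q f f = 0"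
proof (rule fls_double_eq_0)
  have "Q f f + Q f f = Q f f + - Q f f"
    by (subst (2) bracket_antisym[OF assms assms]) (rule refl)
  then show "Q f f + Q f f = 0" by simp
qed

lemma bracket_sum_right:
  assumes "f \<in> laurent_polys" "\<And>x. x \<in> A \<Longrightarrow> g x \<in> laurent_polys"
  shows "Q f (\<Sum>x\<in>A. g x) = (\<Sum>x\<in>A. Q f (g x))"
  using assms(2)
proof (induction A rule: infinite_finite_induct)
  case (insert x A)
  then show ?case by (simp add: bracket_add_right assms(1) laurent_polys_sum)
qed (use laurent_derivation_one[OF laurent_derivation_bracket[OF assms(1)]]
      bracket_add_right[OF assms(1), of 0 0] laurent_polys_const[of 0] in simp_all)

lemma bracket_sum_left:
  assumes "f \<in> laurent_polys" "\<And>x. x \<in> A \<Longrightarrow> g x \<in> laurent_polys"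
  shows "Q (\<Sum>x\<in>A. g x) f = (\<Sum>x\<in>A. Q (g x) f)"
proof -
  have "(\<Sum>x\<in>A. g x) \<in> laurent_polys"
    using assms(2) by (rule laurent_polys_sum)
  from bracket_antisym[OF this assms(1)]
  have "Q (\<Sum>x\<in>A. g x) f = (\<Sum>x\<in>A. - Q f (g x))"
    by (simp add: bracket_sum_right[OF assms] sum_negf)
  also have "\<dots> = (\<Sum>x\<in>A. Q (g x) f)"
    using assms bracket_antisym by (intro sum.cong refl) (metis minus_minus)
  finally show ?thesis .
qed

lemma bracket_X_inv_left:
  assumes "g \<in> laurent_polys"
  shows "Q fls_X_inv g = - (fls_X_inv * fls_X_inv) * Q fls_X g"
  using laurent_derivation_X_inv[OF laurent_derivation_bracket[OF assms]]
  by (simp add: bracket_antisym[OF _ assms] laurent_polys_X laurent_polys_X_inv)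

lemma bracket_X_X_inv_power: "Q fls_X (fls_X_inv ^ n) = 0"
proof -
  have "Q fls_X fls_X_inv = 0"
    using bracket_X_inv_left[OF laurent_polys_X]
      bracket_antisym[OF laurent_polys_X laurent_polys_X_inv]
    by (simp add: bracket_self laurent_polys_X)
  then show ?thesis
    by (induction n) (simp_all add: laurent_derivation_one laurent_derivation_bracket laurent_polys_X
        laurent_polys_X_inv laurent_polys_power bracket_mult_right)
qed

lemma bracket_X_inv_power_left:
  assumes "g \<in> laurent_polys"
  shows "Q (fls_X_inv ^ m) g = - (of_nat m * fls_X_inv ^ (m + 1) * Q fls_X g)"
proof (induction m)
  case 0
  show ?case
    using laurent_derivation_one[OF laurent_derivation_bracket[OF assms]]
      bracket_antisym[OF assms, of 1] laurent_polys_const[of 1] by simp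
next
  case (Suc m)
  then show ?case
    by (simp add: bracket_mult_left assms laurent_polys_X_inv laurent_polys_power bracket_X_inv_left
        algebra_simps)
qed

lemma bracket_X_monomial:
  "Q fls_X (fls_const e * fls_X_inv ^ n) = Q fls_X (fls_const e) * fls_X_inv ^ n"
  by (simp add: bracket_mult_right laurent_polys_X laurent_polys_const laurent_polys_power
      laurent_polys_X_inv bracket_X_X_inv_power)

lemma bracket_monomials:
  "Q (fls_const e * fls_X_inv ^ m) (fls_const d * fls_X_inv ^ n)
   = Q (fls_const e) (fls_const d) * fls_X_inv ^ (m + n)
     - of_nat m * fls_const e * fls_X_inv ^ (m + n + 1) * Q fls_X (fls_const d)
     + of_nat n * fls_const d * fls_X_inv ^ (m + n + 1) * Q fls_X (fls_const e)"
proof -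
  have L: "fls_const e \<in> laurent_polys" "fls_const d \<in> laurent_polys"
    "fls_X_inv ^ m \<in> laurent_polys" "fls_X_inv ^ n \<in> laurent_polys"
    by (simp_all add: laurent_polys_const laurent_polys_power laurent_polys_X_inv)
  have a: "Q (fls_const e * fls_X_inv ^ m) (fls_const d)
      = Q (fls_const e) (fls_const d) * fls_X_inv ^ m
        - fls_const e * (of_nat m * fls_X_inv ^ (m + 1) * Q fls_X (fls_const d))"
    unfolding bracket_mult_left[OF L(2) L(1) L(3)] bracket_X_inv_power_left[OF L(2)] by simp
  have "Q (fls_X_inv ^ m) (fls_X_inv ^ n) = 0"
    by (simp only: bracket_X_inv_power_left[OF L(4)] bracket_X_X_inv_power) simp
  moreover have "Q (fls_const e) (fls_X_inv ^ n)
      = of_nat n * fls_X_inv ^ (n + 1) * Q fls_X (fls_const e)"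
    unfolding bracket_antisym[OF L(1) L(4)] bracket_X_inv_power_left[OF L(1)] by simp
  ultimately have b: "Q (fls_const e * fls_X_inv ^ m) (fls_X_inv ^ n)
      = of_nat n * fls_X_inv ^ (n + 1) * Q fls_X (fls_const e) * fls_X_inv ^ m"
    unfolding bracket_mult_left[OF L(4) L(1) L(3)] by simp
  show ?thesis
    unfolding bracket_mult_right[OF laurent_polys_mult[OF L(1) L(3)] L(2) L(4)] a b
    by (simp add: algebra_simps power_add)
qed

end

section \<open>The Poisson isomorphism\<close>

locale theta_poisson = lnd_algebra \<iota> \<delta> for \<iota> :: "'k::field_char_0 \<Rightarrow> 'b::comm_ring_1" and \<delta> +
  fixes P :: "'b \<Rightarrow> 'b \<Rightarrow> 'b" and \<alpha> :: "'b \<Rightarrow> 'b" and s :: 'k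
    and Py Px :: "'b fls \<Rightarrow> 'b fls \<Rightarrow> 'b fls"
  assumes poisson_B: "poisson_on UNIV \<iota> P"
    and alpha: "poisson_derivation \<iota> P \<alpha>"
    and delta_bracket: "\<delta> (P a b) = P (\<delta> a) b + P a (\<delta> b) + \<alpha> a * \<delta> b - \<delta> a * \<alpha> b"
    and s_nonzero: "s \<noteq> 0"
    and alpha_delta: "\<alpha> (\<delta> b) = \<delta> (\<alpha> b + \<iota> s * b)"
    and poisson_y: "is_poisson_laurent \<iota> P \<alpha> (\<lambda>_. 0) Py"
    and poisson_x: "is_poisson_laurent \<iota> P \<alpha> \<delta> Px"

sublocale theta_poisson \<subseteq> Y: laurent_poisson \<iota> Py
  using poisson_y by unfold_locales (simp add: is_poisson_laurent_def)

sublocale theta_poisson \<subseteq> X: laurent_poisson \<iota> Px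
  using poisson_x by unfold_locales (simp add: is_poisson_laurent_def)

context theta_poisson
begin

lemma P_iota_mult_left: "P (\<iota> c * a) b = \<iota> c * P a b"
  and P_antisym: "P a b = - P b a"
  using poisson_B unfolding poisson_on_def by blast+

lemma P_iota_mult_right: "P a (\<iota> c * b) = \<iota> c * P a b"
  using P_antisym[of a "\<iota> c * b"] P_antisym[of b a] by (simp add: P_iota_mult_left)

lemma P_zero_left: "P 0 b = 0" and P_zero_right: "P a 0 = 0"
  using P_iota_mult_left[of 0 0 b] P_iota_mult_right[of a 0 0] by (simp_all add: iota.zero)

lemma alpha_iota_mult: "\<alpha> (\<iota> c * a) = \<iota> c * \<alpha> a"
  using alpha unfolding poisson_derivation_def derivation_def by auto

lemma Px_const: "Px (fls_const a) (fls_const b) = fls_const (P a b)"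
  and Px_X_const: "Px fls_X (fls_const b) = fls_const (\<alpha> b) * fls_X + fls_const (\<delta> b)"
  using poisson_x unfolding is_poisson_laurent_def by auto

lemma Py_const: "Py (fls_const a) (fls_const b) = fls_const (P a b)"
  and Py_X_const: "Py fls_X (fls_const b) = fls_const (\<alpha> b) * fls_X"
  using poisson_y unfolding is_poisson_laurent_def by auto

lemma alpha_funpow_delta: "\<alpha> ((\<delta> ^^ n) b) = (\<delta> ^^ n) (\<alpha> b) + of_nat n * (\<iota> s * (\<delta> ^^ n) b)"
proof (induction n)
  case (Suc n)
  have "\<alpha> ((\<delta> ^^ Suc n) b) = \<delta> (\<alpha> ((\<delta> ^^ n) b) + \<iota> s * (\<delta> ^^ n) b)"
    by (simp add: alpha_delta)
  also have "\<dots> = (\<delta> ^^ Suc n) (\<alpha> b) + of_nat (Suc n) * (\<iota> s * (\<delta> ^^ Suc n) b)"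
    by (simp add: Suc delta_add delta_of_nat_mult delta_iota_mult algebra_simps)
  finally show ?case .
qed simp

lemma funpow_delta_alpha_eq_0: "(\<delta> ^^ n) b = 0 \<Longrightarrow> (\<delta> ^^ n) (\<alpha> b) = 0"
  using alpha_funpow_delta[of n b] alpha_iota_mult[of 0 0] by (simp add: iota.zero)

definition bracket_term :: "'b \<Rightarrow> 'b \<Rightarrow> nat \<Rightarrow> nat \<Rightarrow> 'b" where
  "bracket_term a b m n = P ((\<delta> ^^ m) a) ((\<delta> ^^ n) b)
     - of_nat m * ((\<delta> ^^ m) a * (\<delta> ^^ n) (\<alpha> b)) + of_nat n * ((\<delta> ^^ m) (\<alpha> a) * (\<delta> ^^ n) b)"

lemma funpow_delta_bracket:
  "(\<delta> ^^ k) (P a b) = (\<Sum>m\<le>k. of_nat (k choose m) * bracket_term a b m (k - m))"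
proof -
  define E where "E m n = \<iota> s * (of_nat m * ((\<delta> ^^ m) a * (\<delta> ^^ Suc n) b)
      - of_nat n * ((\<delta> ^^ Suc m) a * (\<delta> ^^ n) b))" for m n
  have "\<delta> (bracket_term a b m n)
      = bracket_term a b (Suc m) n + bracket_term a b m (Suc n) + E m n" for m n
    by (simp add: bracket_term_def E_def delta_add delta.diff delta_of_nat_mult delta_of_nat
        delta_mult delta_bracket alpha_funpow_delta algebra_simps)
  moreover have "(\<Sum>m\<le>k. of_nat (k choose m) * E m (k - m)) = 0" for k
  proof -
    have "(\<Sum>m\<le>k. of_nat (k choose m) * E m (k - m)) = \<iota> s * (\<Sum>m\<le>k. of_nat (k choose m)
        * (of_nat m * ((\<delta> ^^ m) a * (\<delta> ^^ Suc (k - m)) b)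
           - of_nat (k - m) * ((\<delta> ^^ Suc m) a * (\<delta> ^^ (k - m)) b)))"
      by (simp add: E_def sum_distrib_left mult_ac del: funpow.simps)
    then show ?thesis
      using sum_binomial_absorption_cancel[of k "\<lambda>m n. (\<delta> ^^ m) a * (\<delta> ^^ n) b"] by simp
  qed
  ultimately show ?thesis
    using funpow_delta_binomial[of "bracket_term a b" E k] by (simp add: bracket_term_def)
qed

lemma bracket_X_theta: "Px fls_X (\<theta> s b) = \<theta> s (\<alpha> b) * fls_X"
proof -
  obtain N where N: "(\<delta> ^^ N) b = 0"
    using locally_nilpotent unfolding locally_nilpotent_def by blast
  define f where "f n = fls_const (\<iota> (theta_coeff s n * (of_nat n * s)) * (\<delta> ^^ n) b)
      * fls_X * fls_X_inv ^ n" for n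
  define g where "g n = fls_const (\<iota> (theta_coeff s n) * (\<delta> ^^ Suc n) b) * fls_X_inv ^ n" for n
  have "Px fls_X (\<theta> s b)
      = (\<Sum>n<N. Px fls_X (fls_const (\<iota> (theta_coeff s n) * (\<delta> ^^ n) b) * fls_X_inv ^ n))"
    unfolding theta_map_eq_sum_lessThan[OF N]
    by (intro X.bracket_sum_right laurent_polys_X laurent_polys_mult laurent_polys_const
        laurent_polys_power laurent_polys_X_inv)
  also have "\<dots> = (\<Sum>n<N. fls_const (\<iota> (theta_coeff s n) * (\<delta> ^^ n) (\<alpha> b)) * fls_X_inv ^ n * fls_X
      + f n + g n)"
    unfolding X.bracket_X_monomial Px_X_const f_def g_def alpha_iota_mult delta_iota_mult
      alpha_funpow_delta
    by (simp add: iota_mult algebra_simps flip: fls_plus_const)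
  also have "\<dots> = \<theta> s (\<alpha> b) * fls_X + ((\<Sum>n<N. f n) + (\<Sum>n<N. g n))"
    unfolding theta_map_eq_sum_lessThan[OF funpow_delta_alpha_eq_0[OF N]]
    by (simp add: sum.distrib sum_distrib_right)
  also have "(\<Sum>n<N. f n) = (\<Sum>n<N. f (Suc n))"
    by (rule sum_lessThan_shift_vanishing) (simp_all add: f_def N iota.zero)
  also have "\<dots> = (\<Sum>n<N. - g n)"
  proof (intro sum.cong refl)
    fix n
    have "f (Suc n) = fls_const (\<iota> (- theta_coeff s n) * (\<delta> ^^ Suc n) b) * (fls_X * fls_X_inv)
        * fls_X_inv ^ n"
      unfolding f_def theta_coeff_Suc[OF s_nonzero] by (simp add: mult_ac)
    then show "f (Suc n) = - g n"
      by (simp add: fls_X_times_fls_X_inv iota.minus g_def)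
  qed
  finally show ?thesis by (simp add: sum_negf)
qed

lemma bracket_x_monomials:
  "Px (fls_const e * fls_X_inv ^ m) (fls_const d * fls_X_inv ^ n)
   = fls_const (P e d - of_nat m * e * \<alpha> d + of_nat n * d * \<alpha> e) * fls_X_inv ^ (m + n)
     + fls_const (of_nat n * d * \<delta> e - of_nat m * e * \<delta> d) * fls_X_inv ^ (m + n + 1)"
proof -
  have cancel: "fls_X * (fls_X_inv * h) = (h :: 'b fls)" for h
    by (simp add: mult.assoc[symmetric] fls_X_times_fls_X_inv)
  show ?thesis
    unfolding X.bracket_monomials Px_const Px_X_const
    by (simp add: cancel algebra_simps fls_of_nat
        flip: fls_const_mult_const fls_plus_const fls_minus_const)
qed

lemma bracket_theta_theta: "Px (\<theta> s a) (\<theta> s b) = \<theta> s (P a b)"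
proof -
  obtain N where N: "\<forall>m\<ge>N. (\<delta> ^^ m) a = 0 \<and> (\<delta> ^^ m) b = 0"
    using ex_nilpotency_bound by blast
  define M where "M c n = fls_const (\<iota> (theta_coeff s n) * (\<delta> ^^ n) c) * fls_X_inv ^ n" for c n
  have M_in: "M c n \<in> laurent_polys" for c n
    unfolding M_def
    by (intro laurent_polys_mult laurent_polys_const laurent_polys_power laurent_polys_X_inv)
  have "\<theta> s c = (\<Sum>n<N. M c n)" if "(\<delta> ^^ N) c = 0" for c
    using theta_map_eq_sum_lessThan[OF that] by (simp add: M_def)
  then have "Px (\<theta> s a) (\<theta> s b) = (\<Sum>m<N. \<Sum>n<N. Px (M a m) (M b n))"
    using N by (simp add: X.bracket_sum_left X.bracket_sum_right M_in laurent_polys_sum)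
      (rule sum.swap)
  also have "\<dots> = (\<Sum>m<N. \<Sum>n<N.
        fls_const (\<iota> (theta_coeff s m * theta_coeff s n) * bracket_term a b m n) * fls_X_inv ^ (m + n))
    + (\<Sum>m<N. \<Sum>n<N. fls_const (\<iota> (theta_coeff s m * theta_coeff s n)
        * (of_nat n * ((\<delta> ^^ Suc m) a * (\<delta> ^^ n) b) - of_nat m * ((\<delta> ^^ m) a * (\<delta> ^^ Suc n) b)))
        * fls_X_inv ^ (m + n + 1))"
    unfolding sum.distrib[symmetric]
  proof (intro sum.cong refl)
    fix m n
    let ?e = "\<iota> (theta_coeff s m) * (\<delta> ^^ m) a" and ?d = "\<iota> (theta_coeff s n) * (\<delta> ^^ n) b"
    have "P ?e ?d - of_nat m * ?e * \<alpha> ?d + of_nat n * ?d * \<alpha> ?e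
        = \<iota> (theta_coeff s m * theta_coeff s n) * bracket_term a b m n"
      unfolding bracket_term_def P_iota_mult_left P_iota_mult_right alpha_iota_mult alpha_funpow_delta
      by (simp add: iota_mult algebra_simps)
    moreover have "of_nat n * ?d * \<delta> ?e - of_nat m * ?e * \<delta> ?d
        = \<iota> (theta_coeff s m * theta_coeff s n)
          * (of_nat n * ((\<delta> ^^ Suc m) a * (\<delta> ^^ n) b) - of_nat m * ((\<delta> ^^ m) a * (\<delta> ^^ Suc n) b))"
      unfolding delta_iota_mult by (simp add: iota_mult algebra_simps)
    ultimately show "Px (M a m) (M b n)
        = fls_const (\<iota> (theta_coeff s m * theta_coeff s n) * bracket_term a b m n) * fls_X_inv ^ (m + n)
        + fls_const (\<iota> (theta_coeff s m * theta_coeff s n)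
          * (of_nat n * ((\<delta> ^^ Suc m) a * (\<delta> ^^ n) b) - of_nat m * ((\<delta> ^^ m) a * (\<delta> ^^ Suc n) b)))
          * fls_X_inv ^ (m + n + 1)"
      unfolding M_def bracket_x_monomials by simp
  qed
  also have "\<dots> = \<theta> s (P a b)"
  proof -
    have "bracket_term a b m n = 0" if "N \<le> m \<or> N \<le> n" for m n
      using that N by (auto simp: bracket_term_def funpow_delta_alpha_eq_0 P_zero_left P_zero_right)
    then show ?thesis
      using sum_square_theta_coeff[of N "bracket_term a b", OF _ funpow_delta_bracket]
        sum_square_theta_coeff_telescope[OF s_nonzero, of N "\<lambda>m. (\<delta> ^^ m) a" "\<lambda>n. (\<delta> ^^ n) b"] N
      by simp
  qed
  finally show ?thesis .
qed

definition pullback_bracket :: "'b fls \<Rightarrow> 'b fls \<Rightarrow> 'b fls" where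
  "pullback_bracket f g = \<Theta> (- s) (Px (\<Theta> s f) (\<Theta> s g))"

lemma laurent_derivation_pullback_bracket:
  assumes "f \<in> laurent_polys"
  shows "laurent_derivation (pullback_bracket f)"
  unfolding laurent_derivation_def pullback_bracket_def
proof (intro ballI conjI)
  fix g h :: "'b fls"
  assume g: "g \<in> laurent_polys" and h: "h \<in> laurent_polys"
  note in_L = theta_laurent_in_laurent_polys X.bracket_closed
  show "\<Theta> (- s) (Px (\<Theta> s f) (\<Theta> s (g + h)))
      = \<Theta> (- s) (Px (\<Theta> s f) (\<Theta> s g)) + \<Theta> (- s) (Px (\<Theta> s f) (\<Theta> s h))"
    by (simp add: theta_laurent_add g h X.bracket_add_right in_L)
  show "\<Theta> (- s) (Px (\<Theta> s f) (\<Theta> s (g * h)))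
      = \<Theta> (- s) (Px (\<Theta> s f) (\<Theta> s g)) * h + g * \<Theta> (- s) (Px (\<Theta> s f) (\<Theta> s h))"
    by (simp add: theta_laurent_mult g h X.bracket_mult_right theta_laurent_add laurent_polys_mult
        in_L theta_laurent_opposite_inverse)
qed

lemma pullback_bracket_antisym:
  "f \<in> laurent_polys \<Longrightarrow> g \<in> laurent_polys \<Longrightarrow> pullback_bracket f g = - pullback_bracket g f"
  unfolding pullback_bracket_def
  by (simp add: X.bracket_antisym[of "\<Theta> s f"] theta_laurent_in_laurent_polys theta_laurent_uminus
      X.bracket_closed)

lemma pullback_bracket_const_const:
  "pullback_bracket (fls_const a) (fls_const b) = Py (fls_const a) (fls_const b)"
proof -
  have "pullback_bracket (fls_const a) (fls_const b) = \<Theta> (- s) (\<Theta> s (fls_const (P a b)))"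
    by (simp add: pullback_bracket_def theta_laurent_const bracket_theta_theta)
  then show ?thesis
    by (simp add: theta_laurent_opposite_inverse laurent_polys_const Py_const)
qed

lemma pullback_bracket_X_const:
  "pullback_bracket fls_X (fls_const b) = Py fls_X (fls_const b)"
proof -
  have "pullback_bracket fls_X (fls_const b) = \<Theta> (- s) (\<Theta> s (fls_const (\<alpha> b) * fls_X))"
    by (simp add: pullback_bracket_def theta_laurent_const theta_laurent_X bracket_X_theta
        theta_laurent_mult laurent_polys_const laurent_polys_X)
  then show ?thesis
    by (simp add: theta_laurent_opposite_inverse laurent_polys_mult laurent_polys_const laurent_polys_X
        Py_X_const)
qed

lemma pullback_bracket_X_X: "pullback_bracket fls_X fls_X = Py fls_X fls_X"
  by (simp add: pullback_bracket_def theta_laurent_X X.bracket_self Y.bracket_self laurent_polys_X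
      theta_laurent_eq_sum_superset[of "{}"])

lemma pullback_bracket_eq_Py:
  assumes f: "f \<in> laurent_polys" and g: "g \<in> laurent_polys"
  shows "pullback_bracket f g = Py f g"
proof -
  have const: "pullback_bracket (fls_const a) h = Py (fls_const a) h" if "h \<in> laurent_polys" for a h
  proof (rule laurent_derivation_eqI[OF laurent_derivation_pullback_bracket Y.laurent_derivation_bracket
        _ _ that])
    show "pullback_bracket (fls_const a) fls_X = Py (fls_const a) fls_X"
      unfolding pullback_bracket_antisym[OF laurent_polys_const laurent_polys_X]
        Y.bracket_antisym[OF laurent_polys_const laurent_polys_X]
      by (simp add: pullback_bracket_X_const)
  qed (simp_all add: laurent_polys_const pullback_bracket_const_const)
  have X: "pullback_bracket fls_X h = Py fls_X h" if "h \<in> laurent_polys" for h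
    by (rule laurent_derivation_eqI[OF laurent_derivation_pullback_bracket Y.laurent_derivation_bracket
          _ _ that])
      (simp_all add: laurent_polys_X pullback_bracket_X_const pullback_bracket_X_X)
  show ?thesis
  proof (rule laurent_derivation_eqI[OF laurent_derivation_pullback_bracket[OF f]
        Y.laurent_derivation_bracket[OF f] _ _ g])
    show "pullback_bracket f (fls_const b) = Py f (fls_const b)" for b
      unfolding pullback_bracket_antisym[OF f laurent_polys_const]
        Y.bracket_antisym[OF f laurent_polys_const]
      by (simp add: const f)
    show "pullback_bracket f fls_X = Py f fls_X"
      unfolding pullback_bracket_antisym[OF f laurent_polys_X] Y.bracket_antisym[OF f laurent_polys_X]
      by (simp add: X f)
  qed
qed

lemma theta_laurent_bracket:
  assumes "f \<in> laurent_polys" "g \<in> laurent_polys"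
  shows "\<Theta> s (Py f g) = Px (\<Theta> s f) (\<Theta> s g)"
  using theta_laurent_opposite_inverse[of "Px (\<Theta> s f) (\<Theta> s g)" "- s"]
  by (simp add: pullback_bracket_eq_Py[OF assms, symmetric] pullback_bracket_def
      X.bracket_closed theta_laurent_in_laurent_polys)

lemma poisson_iso_on_theta_laurent:
  "poisson_iso_on laurent_polys (\<lambda>c. fls_const (\<iota> c)) Py Px (\<Theta> s)"
  unfolding poisson_iso_on_def
  by (simp add: bij_betw_theta_laurent theta_laurent_one theta_laurent_add theta_laurent_mult
      theta_laurent_bracket theta_laurent_const theta_map_iota laurent_polys_const)

end

theorem theorem3p8:
  fixes \<iota> :: "'k::field_char_0 \<Rightarrow> 'b::comm_ring_1"
    and P :: "'b \<Rightarrow> 'b \<Rightarrow> 'b"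
    and \<alpha> \<delta> :: "'b \<Rightarrow> 'b"
    and s :: 'k
    and Py Px :: "'b fls \<Rightarrow> 'b fls \<Rightarrow> 'b fls"
  assumes hom: "k_algebra_hom \<iota>"
    and B: "poisson_on UNIV \<iota> P"
    and alpha: "poisson_derivation \<iota> P \<alpha>"
    and delta: "derivation \<iota> \<delta>"
    and compat: "\<forall>a b. \<delta> (P a b) = P (\<delta> a) b + P a (\<delta> b) + \<alpha> a * \<delta> b - \<delta> a * \<alpha> b"
    and nil: "locally_nilpotent \<delta>"
    and s: "s \<noteq> 0"
    and comm: "\<forall>b. \<alpha> (\<delta> b) = \<delta> (\<alpha> b + \<iota> s * b)"
    and Ly: "is_poisson_laurent \<iota> P \<alpha> (\<lambda>_. 0) Py"
    and Lx: "is_poisson_laurent \<iota> P \<alpha> \<delta> Px"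
  shows "\<exists>\<Theta>. poisson_iso_on laurent_polys (\<lambda>c. fls_const (\<iota> c)) Py Px \<Theta>
            \<and> (\<forall>b. \<Theta> (fls_const b) = theta_map \<iota> \<delta> s b) \<and> \<Theta> fls_X = fls_X
            \<and> (\<forall>\<Theta>'. poisson_iso_on laurent_polys (\<lambda>c. fls_const (\<iota> c)) Py Px \<Theta>'
                   \<and> (\<forall>b. \<Theta>' (fls_const b) = theta_map \<iota> \<delta> s b) \<and> \<Theta>' fls_X = fls_X
                   \<longrightarrow> (\<forall>f\<in>laurent_polys. \<Theta>' f = \<Theta> f))"
proof -
  interpret theta_poisson \<iota> \<delta> P \<alpha> s Py Px
    by unfold_locales
      (simp_all add: hom delta nil B alpha s Ly Lx compat[rule_format] comm[rule_format])
  show ?thesis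
  proof (intro exI[of _ "theta_laurent \<iota> \<delta> s"] conjI allI impI ballI)
    show "poisson_iso_on laurent_polys (\<lambda>c. fls_const (\<iota> c)) Py Px (theta_laurent \<iota> \<delta> s)"
      by (rule poisson_iso_on_theta_laurent)
    show "theta_laurent \<iota> \<delta> s (fls_const b) = theta_map \<iota> \<delta> s b" for b
      by (rule theta_laurent_const)
    show "theta_laurent \<iota> \<delta> s fls_X = fls_X"
      by (rule theta_laurent_X)
  next
    fix \<Theta>' :: "'b fls \<Rightarrow> 'b fls" and f :: "'b fls"
    assume "poisson_iso_on laurent_polys (\<lambda>c. fls_const (\<iota> c)) Py Px \<Theta>'
        \<and> (\<forall>b. \<Theta>' (fls_const b) = theta_map \<iota> \<delta> s b) \<and> \<Theta>' fls_X = fls_X"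
      and f: "f \<in> laurent_polys"
    then have hom': "laurent_ring_hom \<Theta>'"
      and const': "\<And>b. \<Theta>' (fls_const b) = theta_map \<iota> \<delta> s b" and X': "\<Theta>' fls_X = fls_X"
      by (blast intro: poisson_iso_on_imp_laurent_ring_hom)+
    show "\<Theta>' f = theta_laurent \<iota> \<delta> s f"
      by (rule laurent_ring_hom_eqI[OF hom' laurent_ring_hom_theta_laurent _ _ f])
        (simp_all only: const' X' theta_laurent_const theta_laurent_X)
  qed
qed

end
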